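(* For $\alpha>0$ and $x>0$, $$G(x;\alpha)=\lim_{n\to\infty}\Bigl(1+\frac n\alpha\Bigr)^{\frac{(x-1)(x-2\alpha)}{2\alpha}}\Gamma\Bigl(1+\frac n\alpha\Bigr)^{x-1}\prod_{k=0}^{n-1}\frac{\Gamma\bigl(\frac{1+k}{\alpha}\bigr)}{\Gamma\bigl(\frac{x+k}{\alpha}\bigr)} .$$
   Context: For $\alpha>0$, $\operatorname{Re}x>0$, $G(x;\alpha)$ is defined by $\ln G(x;\alpha)=\int_0^\infty\frac{e^{-\alpha u}}{u}\bigl\{\frac{(x-1)(x-2\alpha)}{2\alpha}-\frac{x-1}{1-e^{-\alpha u}}+\frac{e^{-(1-\alpha)u}-e^{-(x-\alpha)u}}{(1-e^{-u})(1-e^{-\alpha u})}\bigr\}du$. *)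

theory Defs
  imports "HOL-Analysis.Analysis"
begin

definition lnG_integrand :: "real \<Rightarrow> real \<Rightarrow> real \<Rightarrow> real" where
  "lnG_integrand x \<alpha> u =
     exp (- \<alpha> * u) / u *
       ((x - 1) * (x - 2 * \<alpha>) / (2 * \<alpha>)
        - (x - 1) / (1 - exp (- \<alpha> * u))
        + (exp (- (1 - \<alpha>) * u) - exp (- (x - \<alpha>) * u))
            / ((1 - exp (- u)) * (1 - exp (- \<alpha> * u))))"

definition G :: "real \<Rightarrow> real \<Rightarrow> real" where
  "G x \<alpha> = exp (LBINT u:{0<..}. lnG_integrand x \<alpha> u)"

end

theory Submission
  imports Defs
begin

text \<open>Write \<open>c\<close> for the exponent of \<open>1 + n/\<alpha>\<close>. Taking logarithms, the \<open>n\<close>-th member of the sequence becomes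
  \<open>c ln (1 + n/\<alpha>) + (x - 1) ln \<Gamma>(1 + n/\<alpha>) + \<Sum>k<n. ln \<Gamma>((1 + k)/\<alpha>) - ln \<Gamma>((x + k)/\<alpha>)\<close>.
  Each logarithm is an integral over \<open>(0, \<infinity>)\<close>: the first by Frullani's integral, the others by
  Malmsten's formula for \<open>ln \<Gamma>\<close>, which follows from the Bohr--Mollerup theorem. In the sum of the
  integrands the geometric series in \<open>exp (- v)\<close> adds up, leaving \<open>(1 - exp (- n v))\<close> times the
  integrand of \<open>ln G(x; \<alpha>)\<close>, and dominated convergence lets \<open>n \<rightarrow> \<infinity>\<close>. All integrands are
  exponential sums divided by powers of \<open>v\<close> and \<open>1 - exp (- v)\<close>; they are integrable because
  their numerators vanish to the right order at \<open>0\<close>.\<close>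

lemma has_real_derivative_exp_sum:
  fixes ps :: "(real \<times> real) list"
  shows "((\<lambda>v. \<Sum>(a, l)\<leftarrow>ps. a * (- l) ^ m * exp (- l * v)) has_real_derivative
           (\<Sum>(a, l)\<leftarrow>ps. a * (- l) ^ Suc m * exp (- l * v))) (at v)"
  by (induction ps) (auto intro!: derivative_eq_intros simp: algebra_simps)

lemma abs_exp_sum_le:
  fixes ps :: "(real \<times> real) list"
  assumes "\<And>a l. (a, l) \<in> set ps \<Longrightarrow> l \<ge> \<delta>" and "\<delta> \<ge> 0" and "v \<ge> 0"
  shows "\<bar>\<Sum>(a, l)\<leftarrow>ps. a * (- l) ^ m * exp (- l * v)\<bar>
           \<le> (\<Sum>(a, l)\<leftarrow>ps. \<bar>a\<bar> * l ^ m) * exp (- \<delta> * v)"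
proof -
  have "\<bar>\<Sum>(a, l)\<leftarrow>ps. a * (- l) ^ m * exp (- l * v)\<bar>
          \<le> (\<Sum>(a, l)\<leftarrow>ps. \<bar>a * (- l) ^ m * exp (- l * v)\<bar>)"
    using sum_list_abs[of "map (\<lambda>(a, l). a * (- l) ^ m * exp (- l * v)) ps"]
    by (simp add: split_def o_def)
  also have "\<dots> \<le> (\<Sum>(a, l)\<leftarrow>ps. \<bar>a\<bar> * l ^ m * exp (- \<delta> * v))"
  proof (rule sum_list_mono, clarify)
    fix a l assume "(a, l) \<in> set ps"
    then have "l \<ge> 0" "exp (- l * v) \<le> exp (- \<delta> * v)"
      using assms by (force, auto intro: mult_right_mono)
    then show "\<bar>a * (- l) ^ m * exp (- l * v)\<bar> \<le> \<bar>a\<bar> * l ^ m * exp (- \<delta> * v)"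
      by (simp add: abs_mult power_abs mult_left_mono)
  qed
  also have "\<dots> = (\<Sum>(a, l)\<leftarrow>ps. \<bar>a\<bar> * l ^ m) * exp (- \<delta> * v)"
    by (induction ps) (auto simp: algebra_simps)
  finally show ?thesis .
qed

text \<open>Taylor's theorem at 0: the vanishing moments kill all terms of order less than \<open>n\<close>.\<close>
lemma abs_exp_sum_le_power:
  fixes ps :: "(real \<times> real) list"
  assumes pos: "\<And>a l. (a, l) \<in> set ps \<Longrightarrow> l > 0"
    and moments: "\<And>m. m < n \<Longrightarrow> (\<Sum>(a, l)\<leftarrow>ps. a * l ^ m) = 0"
    and v: "0 < v"
  shows "\<bar>\<Sum>(a, l)\<leftarrow>ps. a * exp (- l * v)\<bar> \<le> (\<Sum>(a, l)\<leftarrow>ps. \<bar>a\<bar> * l ^ n) / fact n * v ^ n"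
proof -
  define f where "f m v = (\<Sum>(a, l)\<leftarrow>ps. a * (- l) ^ m * exp (- l * v))" for m v
  have "\<forall>m t. m < n \<and> 0 \<le> t \<and> t \<le> v \<longrightarrow> (f m has_real_derivative f (Suc m) t) (at t)"
    unfolding f_def using has_real_derivative_exp_sum by (intro allI impI)
  from Maclaurin2[OF v refl this] obtain t where t: "0 < t" "t \<le> v"
    and taylor: "f 0 v = (\<Sum>m<n. f m 0 / fact m * v ^ m) + f n t / fact n * v ^ n"
    by blast
  have "f m 0 = (- 1) ^ m * (\<Sum>(a, l)\<leftarrow>ps. a * l ^ m)" for m
    unfolding f_def by (induction ps) (auto simp: power_minus' distrib_left)
  then have "f 0 v = f n t / fact n * v ^ n"
    using taylor moments by simp
  moreover have "\<bar>f n t\<bar> \<le> (\<Sum>(a, l)\<leftarrow>ps. \<bar>a\<bar> * l ^ n)"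
    using abs_exp_sum_le[of ps 0 t n] pos t unfolding f_def by fastforce
  ultimately show ?thesis
    using v by (simp add: f_def abs_mult divide_right_mono mult_right_mono)
qed

lemma nn_integral_exp_minus:
  assumes "t > 0"
  shows "(\<integral>\<^sup>+v. ennreal (indicator {0<..} v * exp (- t * v)) \<partial>lborel) = ennreal (1 / t)"
proof -
  have "((\<lambda>v::real. exp (- t * v)) has_integral exp (- t * 0) / t) {0..}"
    using assms by (rule has_integral_exp_minus_to_infinity)
  from nn_integral_has_integral_lebesgue[OF _ this]
  have "(\<integral>\<^sup>+v. ennreal (indicator {0..} v * exp (- t * v)) \<partial>lborel) = ennreal (1 / t)"
    by simp
  moreover have "(\<integral>\<^sup>+v. ennreal (indicator {0<..} v * exp (- t * v)) \<partial>lborel)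
                   = (\<integral>\<^sup>+v. ennreal (indicator {0..} v * exp (- t * v)) \<partial>lborel)"
    by (intro nn_integral_cong_AE)
      (use AE_lborel_singleton[of 0] in \<open>eventually_elim, auto simp: indicator_def\<close>)
  ultimately show ?thesis
    by simp
qed

lemma set_integrable_exp_minus:
  assumes "t > 0"
  shows "set_integrable lborel {0<..} (\<lambda>v::real. exp (- t * v))"
  unfolding set_integrable_def
  using nn_integral_exp_minus[OF assms] by (intro integrableI_nn_integral_finite) auto

lemma one_minus_exp_ge:
  fixes a v :: real
  assumes "a \<ge> 0" and "v \<ge> 0"
  shows "1 - exp (- a * v) \<ge> (1 - exp (- a)) * min 1 v"
proof (cases "v \<le> 1")
  case True
  have "exp (- a * v) = exp ((1 - v) *\<^sub>R 0 + v *\<^sub>R (- a))"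
    by simp
  also have "\<dots> \<le> (1 - v) * exp 0 + v * exp (- a)"
    using True assms by (intro convex_onD[OF exp_convex]) auto
  finally show ?thesis
    using True by (simp add: algebra_simps)
next
  case False
  then have "exp (- a * v) \<le> exp (- a)"
    using assms by (simp add: mult_le_cancel_left1)
  with False show ?thesis
    by simp
qed

text \<open>Near 0 the vanishing moments compensate the zero of the denominator, at infinity the
  frequencies give the decay: the quotient is dominated by a multiple of \<open>exp (- \<delta> * v)\<close>.\<close>
lemma set_integrable_exp_sum_quotient:
  fixes ps :: "(real \<times> real) list" and D F :: "real \<Rightarrow> real"
  assumes \<delta>: "\<delta> > 0" and freq: "\<And>a l. (a, l) \<in> set ps \<Longrightarrow> l \<ge> \<delta>"
    and moments: "\<And>m. m < n \<Longrightarrow> (\<Sum>(a, l)\<leftarrow>ps. a * l ^ m) = 0"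
    and d: "d > 0" and D: "\<And>v. v > 0 \<Longrightarrow> D v \<ge> d * min 1 v ^ n"
    and F: "\<And>v. v > 0 \<Longrightarrow> F v = (\<Sum>(a, l)\<leftarrow>ps. a * exp (- l * v)) / D v"
    and meas: "F \<in> borel_measurable borel"
  shows "set_integrable lborel {0<..} F"
proof -
  define K0 where "K0 = (\<Sum>(a, l)\<leftarrow>ps. \<bar>a\<bar> * l ^ n) / fact n"
  define Kinf where "Kinf = (\<Sum>(a, l)\<leftarrow>ps. \<bar>a\<bar>)"
  define C where "C = (K0 * exp \<delta> + Kinf) / d"
  have pos: "\<And>a l. (a, l) \<in> set ps \<Longrightarrow> l > 0"
    using freq \<delta> by force
  have "K0 \<ge> 0"
    unfolding K0_def using pos by (fastforce intro!: divide_nonneg_pos sum_list_nonneg)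
  have "Kinf \<ge> 0"
    unfolding Kinf_def by (auto intro!: sum_list_nonneg)
  have bound: "\<bar>F v\<bar> \<le> C * exp (- \<delta> * v)" if v: "v > 0" for v
  proof (cases "v \<le> 1")
    case True
    with D[OF v] have Dv: "D v \<ge> d * v ^ n"
      by simp
    have "\<bar>\<Sum>(a, l)\<leftarrow>ps. a * exp (- l * v)\<bar> \<le> K0 * v ^ n"
      unfolding K0_def using abs_exp_sum_le_power[of ps n v] pos moments v by simp
    then have "\<bar>F v\<bar> \<le> (K0 * v ^ n) / (d * v ^ n)"
      unfolding F[OF v] abs_divide using Dv d v \<open>K0 \<ge> 0\<close> by (intro frac_le) auto
    also have "\<dots> = K0 / d"
      using v by simp
    also have "\<dots> \<le> K0 * (exp \<delta> * exp (- \<delta> * v)) / d"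
      using True \<delta> d \<open>K0 \<ge> 0\<close>
      by (intro divide_right_mono) (simp_all add: mult_le_cancel_left1 flip: exp_add)
    also have "\<dots> \<le> C * exp (- \<delta> * v)"
      using \<open>Kinf \<ge> 0\<close> d by (simp add: C_def field_simps)
    finally show ?thesis .
  next
    case False
    with D[OF v] have Dv: "D v \<ge> d"
      by simp
    have "\<bar>F v\<bar> \<le> (Kinf * exp (- \<delta> * v)) / d"
      unfolding F[OF v] abs_divide using Dv d v abs_exp_sum_le[of ps \<delta> v 0] freq \<delta>
      by (intro frac_le) (auto simp: Kinf_def)
    also have "\<dots> \<le> C * exp (- \<delta> * v)"
      using \<open>K0 \<ge> 0\<close> d by (simp add: C_def field_simps)
    finally show ?thesis .
  qed
  show ?thesis
  proof (rule set_integrable_bound[OF set_integrable_mult_right[OF set_integrable_exp_minus[OF \<delta>]]])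
    show "set_borel_measurable lborel {0<..} F"
      unfolding set_borel_measurable_def using meas by measurable
    show "AE v in lborel. v \<in> {0<..} \<longrightarrow> norm (F v) \<le> norm (C * exp (- \<delta> * v))"
      using bound by (auto intro!: AE_I2 order.trans[OF _ abs_ge_self])
  qed
qed

definition frullani_integrand :: "real \<Rightarrow> real \<Rightarrow> real \<Rightarrow> real" where
  "frullani_integrand a b v = (exp (- a * v) - exp (- b * v)) / v"

lemma set_integrable_frullani:
  assumes "a > 0" and "b > 0"
  shows "set_integrable lborel {0<..} (frullani_integrand a b)"
proof (rule set_integrable_exp_sum_quotient
    [where ps = "[(1, a), (- 1, b)]" and n = 1 and \<delta> = "min a b" and d = 1 and D = "\<lambda>v. v"])
  show "frullani_integrand a b \<in> borel_measurable borel"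
    unfolding frullani_integrand_def by measurable
qed (use assms in \<open>auto simp: frullani_integrand_def\<close>)

lemma has_integral_exp_minus_frullani_integrand:
  assumes "a \<le> b" and "v > 0"
  shows "((\<lambda>t. exp (- t * v)) has_integral frullani_integrand a b v) {a..b}"
proof -
  have "((\<lambda>t. exp (- t * v)) has_integral (- exp (- b * v) / v) - (- exp (- a * v) / v)) {a..b}"
  proof (rule fundamental_theorem_of_calculus[OF \<open>a \<le> b\<close>])
    fix t
    show "((\<lambda>t. - exp (- t * v) / v) has_vector_derivative exp (- t * v)) (at t within {a..b})"
      using \<open>v > 0\<close> by (auto intro!: derivative_eq_intros simp flip: has_real_derivative_iff_has_vector_derivative)
  qed
  then show ?thesis
    by (simp add: frullani_integrand_def diff_divide_distrib)
qed

lemma nn_integral_inverse_interval: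
  assumes "0 < a" and "a \<le> b"
  shows "(\<integral>\<^sup>+t. ennreal (indicator {a..b} t * (1 / t)) \<partial>lborel) = ennreal (ln b - ln a)"
proof -
  have "((\<lambda>t. 1 / t) has_integral (ln b - ln a)) {a..b}"
  proof (rule fundamental_theorem_of_calculus[OF \<open>a \<le> b\<close>])
    fix t assume "t \<in> {a..b}"
    then show "(ln has_vector_derivative 1 / t) (at t within {a..b})"
      using \<open>0 < a\<close> by (auto intro!: derivative_eq_intros simp flip: has_real_derivative_iff_has_vector_derivative)
  qed
  from nn_integral_has_integral_lebesgue[OF _ this] show ?thesis
    using \<open>0 < a\<close> by simp
qed

text \<open>Frullani's integral, by writing the integrand as an inner integral over \<open>t \<in> [a, b]\<close>
  of \<open>exp (- t * v)\<close> and swapping the order of integration (Tonelli).\<close>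
lemma nn_integral_frullani:
  assumes "0 < a" and "a \<le> b"
  shows "(\<integral>\<^sup>+v. ennreal (indicator {0<..} v * frullani_integrand a b v) \<partial>lborel) = ennreal (ln b - ln a)"
proof -
  define h where "h v t = ennreal (indicator {0<..} v * (indicator {a..b} t * exp (- t * v)))" for v t :: real
  have inner: "ennreal (indicator {0<..} v * frullani_integrand a b v) = (\<integral>\<^sup>+t. h v t \<partial>lborel)" for v
  proof (cases "v > 0")
    case True
    from nn_integral_has_integral_lebesgue[OF _ has_integral_exp_minus_frullani_integrand[OF \<open>a \<le> b\<close> True]]
    show ?thesis
      using True by (simp add: h_def)
  qed (simp add: h_def)
  have outer: "(\<integral>\<^sup>+v. h v t \<partial>lborel) = ennreal (indicator {a..b} t * (1 / t))" for t
  proof (cases "t \<in> {a..b}")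
    case True
    then show ?thesis
      using nn_integral_exp_minus[of t] \<open>0 < a\<close> by (simp add: h_def)
  qed (simp add: h_def)
  have "(\<integral>\<^sup>+v. ennreal (indicator {0<..} v * frullani_integrand a b v) \<partial>lborel)
          = (\<integral>\<^sup>+t. (\<integral>\<^sup>+v. h v t \<partial>lborel) \<partial>lborel)"
    unfolding inner h_def by (rule lborel_pair.Fubini') measurable
  also have "\<dots> = ennreal (ln b - ln a)"
    unfolding outer using assms by (rule nn_integral_inverse_interval)
  finally show ?thesis .
qed

lemma frullani_integral:
  assumes "a > 0" and "b > 0"
  shows "(LBINT v:{0<..}. frullani_integrand a b v) = ln b - ln a"
proof -
  have le: "(LBINT v:{0<..}. frullani_integrand a b v) = ln b - ln a" if "0 < a" "a \<le> b" for a b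
  proof -
    have nonneg: "0 \<le> indicator {0<..} v * frullani_integrand a b v" for v :: real
      using that by (auto simp: indicator_def frullani_integrand_def mult_right_mono)
    have meas: "(\<lambda>v. indicator {0<..} v * frullani_integrand a b v) \<in> borel_measurable lborel"
      unfolding frullani_integrand_def by measurable
    have "ln b - ln a \<ge> 0"
      using that by simp
    from nn_integral_eq_integrable[OF meas _ this] nn_integral_frullani[OF that] nonneg
    show ?thesis
      by (simp add: set_lebesgue_integral_def)
  qed
  show ?thesis
  proof (cases "a \<le> b")
    case False
    have "frullani_integrand a b = (\<lambda>v. - frullani_integrand b a v)"
      by (auto simp: frullani_integrand_def fun_eq_iff diff_divide_distrib)
    then show ?thesis
      using le[of b a] False assms by (simp add: set_integral_uminus[OF set_integrable_frullani])
  qed (use le assms in blast)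
qed

text \<open>Malmsten's integrand for \<open>ln \<Gamma>(z)\<close>,
  \<open>((z - 1) exp (- t) - (exp (- t) - exp (- z t)) / (1 - exp (- t))) / t\<close>,
  after the substitution \<open>t = \<alpha> v\<close>.\<close>
definition malmsten_integrand :: "real \<Rightarrow> real \<Rightarrow> real \<Rightarrow> real" where
  "malmsten_integrand \<alpha> z v =
     ((z - 1) * exp (- \<alpha> * v) - (exp (- \<alpha> * v) - exp (- (z * \<alpha>) * v)) / (1 - exp (- \<alpha> * v))) / v"

lemma set_integrable_malmsten:
  assumes \<alpha>: "\<alpha> > 0" and z: "z > 0"
  shows "set_integrable lborel {0<..} (malmsten_integrand \<alpha> z)"
proof (rule set_integrable_exp_sum_quotient
    [where ps = "[(z - 1, \<alpha>), (- (z - 1), 2 * \<alpha>), (- 1, \<alpha>), (1, z * \<alpha>)]" and n = 2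
      and \<delta> = "min \<alpha> (z * \<alpha>)" and d = "1 - exp (- \<alpha>)" and D = "\<lambda>v. v * (1 - exp (- \<alpha> * v))"])
  show "malmsten_integrand \<alpha> z \<in> borel_measurable borel"
    unfolding malmsten_integrand_def by measurable
  show "v * (1 - exp (- \<alpha> * v)) \<ge> (1 - exp (- \<alpha>)) * min 1 v ^ 2" if "v > 0" for v
    using mult_mono[OF min.cobounded2 one_minus_exp_ge[of \<alpha> v]] \<alpha> that
    by (simp add: power2_eq_square mult_ac)
  show "malmsten_integrand \<alpha> z v =
      (\<Sum>(a, l)\<leftarrow>[(z - 1, \<alpha>), (- (z - 1), 2 * \<alpha>), (- 1, \<alpha>), (1, z * \<alpha>)]. a * exp (- l * v))
        / (v * (1 - exp (- \<alpha> * v)))" if "v > 0" for v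
  proof -
    have "exp (- (2 * \<alpha>) * v) = exp (- \<alpha> * v) * exp (- \<alpha> * v)"
      by (simp flip: exp_add)
    moreover have "1 - exp (- \<alpha> * v) \<noteq> 0"
      using \<alpha> that by simp
    ultimately show ?thesis
      unfolding malmsten_integrand_def using that by (simp add: field_simps)
  qed
qed (use \<alpha> z in \<open>auto simp: less_Suc_eq numeral_2_eq_2 algebra_simps\<close>)

lemma malmsten_integrand_shift:
  assumes "\<alpha> > 0" and "v > 0"
  shows "malmsten_integrand \<alpha> (z + 1) v = malmsten_integrand \<alpha> z v + frullani_integrand \<alpha> (z * \<alpha>) v"
proof -
  have "exp (- ((z + 1) * \<alpha>) * v) = exp (- (z * \<alpha>) * v) * exp (- \<alpha> * v)"
    by (simp add: algebra_simps flip: exp_add)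
  moreover have "1 - exp (- \<alpha> * v) \<noteq> 0"
    using assms by simp
  ultimately show ?thesis
    unfolding malmsten_integrand_def frullani_integrand_def using assms by (simp add: field_simps)
qed

lemma malmsten_integral_shift:
  assumes \<alpha>: "\<alpha> > 0" and z: "z > 0"
  shows "(LBINT v:{0<..}. malmsten_integrand \<alpha> (z + 1) v) = ln z + (LBINT v:{0<..}. malmsten_integrand \<alpha> z v)"
proof -
  have "(LBINT v:{0<..}. malmsten_integrand \<alpha> (z + 1) v)
          = (LBINT v:{0<..}. malmsten_integrand \<alpha> z v + frullani_integrand \<alpha> (z * \<alpha>) v)"
    by (rule set_lebesgue_integral_cong) (auto simp: malmsten_integrand_shift[OF \<alpha>])
  also have "\<dots> = (LBINT v:{0<..}. malmsten_integrand \<alpha> z v) + (ln (z * \<alpha>) - ln \<alpha>)"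
    using set_integrable_malmsten[OF \<alpha> z] set_integrable_frullani[of \<alpha> "z * \<alpha>"]
      frullani_integral[of \<alpha> "z * \<alpha>"] \<alpha> z
    by (simp add: set_integral_add)
  finally show ?thesis
    using \<alpha> z by (simp add: ln_mult)
qed

lemma malmsten_integrand_convex:
  assumes \<alpha>: "\<alpha> > 0" and v: "v > 0" and t: "0 \<le> t" "t \<le> 1"
  shows "malmsten_integrand \<alpha> ((1 - t) * x + t * y) v
           \<le> (1 - t) * malmsten_integrand \<alpha> x v + t * malmsten_integrand \<alpha> y v"
proof -
  define A where "A = exp (- \<alpha> * v)"
  define K where "K = 1 / ((1 - A) * v)"
  have "K > 0"
    using \<alpha> v by (simp add: K_def A_def)
  have affine_exp: "malmsten_integrand \<alpha> z v = (z - 1) * A / v - A * K + K * exp (- (\<alpha> * v) * z)" for z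
  proof -
    have "(A - E) / (1 - A) / v = A * K - K * E" for E
      by (simp add: K_def diff_divide_distrib)
    then show ?thesis
      unfolding malmsten_integrand_def A_def[symmetric]
      by (simp add: diff_divide_distrib mult.commute[of z])
  qed
  have "exp (- (\<alpha> * v) * ((1 - t) * x + t * y))
          = exp ((1 - t) *\<^sub>R (- (\<alpha> * v) * x) + t *\<^sub>R (- (\<alpha> * v) * y))"
    by (simp add: algebra_simps)
  also have "\<dots> \<le> (1 - t) * exp (- (\<alpha> * v) * x) + t * exp (- (\<alpha> * v) * y)"
    using t by (intro convex_onD[OF exp_convex]) auto
  finally have "K * exp (- (\<alpha> * v) * ((1 - t) * x + t * y))
                  \<le> K * ((1 - t) * exp (- (\<alpha> * v) * x) + t * exp (- (\<alpha> * v) * y))"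
    using \<open>K > 0\<close> by simp
  then show ?thesis
    unfolding affine_exp by (simp add: algebra_simps add_divide_distrib diff_divide_distrib)
qed

lemma convex_on_malmsten_integral:
  assumes \<alpha>: "\<alpha> > 0"
  shows "convex_on {0<..} (\<lambda>z. LBINT v:{0<..}. malmsten_integrand \<alpha> z v)"
proof (rule convex_onI)
  fix t x y :: real
  assume t: "0 < t" "t < 1" and xy: "x \<in> {0<..}" "y \<in> {0<..}"
  then have "(1 - t) * x + t * y > 0"
    by (simp add: add_pos_pos)
  then have "(LBINT v:{0<..}. malmsten_integrand \<alpha> ((1 - t) * x + t * y) v)
               \<le> (LBINT v:{0<..}. (1 - t) * malmsten_integrand \<alpha> x v + t * malmsten_integrand \<alpha> y v)"
    using set_integrable_malmsten[OF \<alpha>] xy t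
    by (intro set_integral_mono)
       (auto intro!: malmsten_integrand_convex[OF \<alpha>] set_integral_add set_integrable_mult_right)
  also have "\<dots> = (1 - t) * (LBINT v:{0<..}. malmsten_integrand \<alpha> x v)
                  + t * (LBINT v:{0<..}. malmsten_integrand \<alpha> y v)"
    using set_integrable_malmsten[OF \<alpha>] xy by (simp add: set_integral_add set_integrable_mult_right)
  finally show "(LBINT v:{0<..}. malmsten_integrand \<alpha> ((1 - t) *\<^sub>R x + t *\<^sub>R y) v)
      \<le> (1 - t) * (LBINT v:{0<..}. malmsten_integrand \<alpha> x v) + t * (LBINT v:{0<..}. malmsten_integrand \<alpha> y v)"
    by simp
qed (rule convex_real_interval)

text \<open>Bohr--Mollerup: the integral vanishes at 1, satisfies the functional equation of
  \<open>ln \<Gamma>\<close> and is convex.\<close>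
theorem malmsten_integral_eq_ln_Gamma:
  assumes \<alpha>: "\<alpha> > 0" and z: "z > 0"
  shows "(LBINT v:{0<..}. malmsten_integrand \<alpha> z v) = ln (Gamma z)"
proof -
  have "exp (LBINT v:{0<..}. malmsten_integrand \<alpha> z v) = Gamma z"
  proof (rule Gamma_pos_real_unique)
    show "exp (LBINT v:{0<..}. malmsten_integrand \<alpha> 1 v) = 1"
      by (simp add: malmsten_integrand_def)
    show "exp (LBINT v:{0<..}. malmsten_integrand \<alpha> (x + 1) v) = x * exp (LBINT v:{0<..}. malmsten_integrand \<alpha> x v)"
      if "x > 0" for x
      using that by (simp add: malmsten_integral_shift[OF \<alpha> that] exp_add)
    show "convex_on {0<..} (ln \<circ> (\<lambda>z. exp (LBINT v:{0<..}. malmsten_integrand \<alpha> z v)))"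
      using convex_on_malmsten_integral[OF \<alpha>] by (simp add: o_def)
  qed (use z in auto)
  then show ?thesis
    by (metis ln_exp)
qed

lemma lnG_integrand_altdef:
  fixes x \<alpha> v :: real
  defines "A \<equiv> exp (- \<alpha> * v)" and "q \<equiv> exp (- v)" and "X \<equiv> exp (- x * v)"
  shows "lnG_integrand x \<alpha> v =
           A / v * ((x - 1) * (x - 2 * \<alpha>) / (2 * \<alpha>) - (x - 1) / (1 - A) + (q - X) / (A * (1 - q) * (1 - A)))"
proof -
  have "exp (- (1 - \<alpha>) * v) = q / A" "exp (- (x - \<alpha>) * v) = X / A"
    unfolding A_def q_def X_def by (simp_all add: algebra_simps flip: exp_diff)
  then show ?thesis
    unfolding lnG_integrand_def A_def[symmetric] q_def[symmetric] by (simp add: diff_divide_distrib)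
qed

lemma set_integrable_lnG_integrand:
  assumes \<alpha>: "\<alpha> > 0" and x: "x > 0"
  shows "set_integrable lborel {0<..} (lnG_integrand x \<alpha>)"
proof -
  define c where "c = (x - 1) * (x - 2 * \<alpha>) / (2 * \<alpha>)"
  define ps where "ps = [(c, \<alpha>), (- c, \<alpha> + 1), (- c, 2 * \<alpha>), (c, 2 * \<alpha> + 1),
                         (- (x - 1), \<alpha>), (x - 1, \<alpha> + 1), (1, 1), (- 1, x)]"
  show ?thesis
  proof (rule set_integrable_exp_sum_quotient[where ps = ps and n = 3 and \<delta> = "min \<alpha> (min 1 x)"
        and d = "(1 - exp (- 1)) * (1 - exp (- \<alpha>))" and D = "\<lambda>v. v * (1 - exp (- v)) * (1 - exp (- \<alpha> * v))"])
    show "lnG_integrand x \<alpha> \<in> borel_measurable borel"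
      unfolding lnG_integrand_def by measurable
    show "\<And>a l. (a, l) \<in> set ps \<Longrightarrow> l \<ge> min \<alpha> (min 1 x)"
      using \<alpha> x unfolding ps_def by auto
    show "(\<Sum>(a, l)\<leftarrow>ps. a * l ^ m) = 0" if "m < 3" for m
      using that \<alpha> unfolding ps_def c_def
      by (auto simp: less_Suc_eq numeral_3_eq_3 power2_eq_square field_simps)
    show "v * (1 - exp (- v)) * (1 - exp (- \<alpha> * v)) \<ge> (1 - exp (- 1)) * (1 - exp (- \<alpha>)) * min 1 v ^ 3"
      if "v > 0" for v
      using mult_mono[OF mult_mono[OF min.cobounded2 one_minus_exp_ge[of 1 v]] one_minus_exp_ge[of \<alpha> v]] \<alpha> that
      by (simp add: power3_eq_cube mult_ac)
    show "lnG_integrand x \<alpha> v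
            = (\<Sum>(a, l)\<leftarrow>ps. a * exp (- l * v)) / (v * (1 - exp (- v)) * (1 - exp (- \<alpha> * v)))"
      if "v > 0" for v
    proof -
      define A where "A = exp (- \<alpha> * v)"
      define q where "q = exp (- v)"
      define X where "X = exp (- x * v)"
      have "A \<noteq> 0" "1 - A \<noteq> 0" "1 - q \<noteq> 0"
        using \<alpha> that by (simp_all add: A_def q_def)
      moreover have num: "(\<Sum>(a, l)\<leftarrow>ps. a * exp (- l * v)) = c * A - c * A * q - c * A * A + c * A * A * q
                       - (x - 1) * A + (x - 1) * A * q + q - X"
        unfolding ps_def A_def q_def X_def by (simp add: algebra_simps flip: exp_add)
      ultimately show ?thesis
        unfolding lnG_integrand_altdef A_def[symmetric] q_def[symmetric] X_def[symmetric] c_def[symmetric] num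
        using that by (simp add: divide_simps) (simp add: algebra_simps)
    qed
  qed (use \<alpha> x in simp_all)
qed

lemma malmsten_integrand_diff:
  assumes "\<alpha> > 0" and "v > 0"
  shows "malmsten_integrand \<alpha> ((1 + real k) / \<alpha>) v - malmsten_integrand \<alpha> ((x + real k) / \<alpha>) v
           = (1 - x) / \<alpha> * exp (- \<alpha> * v) / v
             + (exp (- v) - exp (- x * v)) / ((1 - exp (- \<alpha> * v)) * v) * exp (- v) ^ k"
proof -
  have "exp (- ((c + real k) / \<alpha> * \<alpha>) * v) = exp (- c * v) * exp (- v) ^ k" for c
  proof -
    have "(c + real k) / \<alpha> * \<alpha> = c + real k"
      using assms by simp
    then show ?thesis
      by (simp add: algebra_simps flip: exp_add exp_of_nat_mult)
  qed
  moreover have "1 - exp (- \<alpha> * v) \<noteq> 0"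
    using assms by simp
  ultimately show ?thesis
    unfolding malmsten_integrand_def using assms by (simp add: divide_simps) (simp add: algebra_simps)
qed

text \<open>The identity behind the theorem: integrated over \<open>(0, \<infinity>)\<close>, its left-hand side is the
  logarithm of the \<open>n\<close>-th member of the sequence.\<close>
lemma lnG_integrand_truncation:
  assumes \<alpha>: "\<alpha> > 0" and v: "v > 0"
  shows "(x - 1) * (x - 2 * \<alpha>) / (2 * \<alpha>) * frullani_integrand \<alpha> (\<alpha> + n) v
           + (x - 1) * malmsten_integrand \<alpha> (1 + n / \<alpha>) v
           + (\<Sum>k<n. malmsten_integrand \<alpha> ((1 + real k) / \<alpha>) v - malmsten_integrand \<alpha> ((x + real k) / \<alpha>) v)
         = (1 - exp (- v) ^ n) * lnG_integrand x \<alpha> v"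
proof -
  define A where "A = exp (- \<alpha> * v)"
  define q where "q = exp (- v)"
  define X where "X = exp (- x * v)"
  have nz: "A \<noteq> 0" "1 - A \<noteq> 0" "1 - q \<noteq> 0"
    using \<alpha> v by (simp_all add: A_def q_def)
  have shifted: "exp (- ((1 + n / \<alpha>) * \<alpha>) * v) = A * q ^ n" "exp (- (\<alpha> + n) * v) = A * q ^ n"
    using \<alpha> by (simp_all add: A_def q_def algebra_simps flip: exp_add exp_of_nat_mult)
  have "(\<Sum>k<n. malmsten_integrand \<alpha> ((1 + real k) / \<alpha>) v - malmsten_integrand \<alpha> ((x + real k) / \<alpha>) v)
          = n * ((1 - x) / \<alpha> * A / v) + (q - X) / ((1 - A) * v) * (\<Sum>k<n. q ^ k)"
    unfolding malmsten_integrand_diff[OF \<alpha> v] A_def q_def X_def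
    by (simp add: sum.distrib sum_distrib_left)
  also have "\<dots> = n * ((1 - x) / \<alpha> * A / v) + (q - X) / ((1 - A) * v) * ((1 - q ^ n) / (1 - q))"
    using nz by (simp add: sum_gp_strict)
  finally show ?thesis
    unfolding lnG_integrand_altdef frullani_integrand_def malmsten_integrand_def shifted
      A_def[symmetric] q_def[symmetric] X_def[symmetric]
    using nz v \<alpha> by (simp add: divide_simps) (simp add: algebra_simps)
qed

lemma set_integral_sum:
  fixes f :: "'i \<Rightarrow> 'a \<Rightarrow> 'b::{banach, second_countable_topology}"
  assumes "\<And>i. i \<in> I \<Longrightarrow> set_integrable M A (f i)"
  shows "set_integrable M A (\<lambda>x. \<Sum>i\<in>I. f i x)"
    and "(LINT x:A|M. (\<Sum>i\<in>I. f i x)) = (\<Sum>i\<in>I. LINT x:A|M. f i x)"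
  using assms
  by (simp_all add: set_integrable_def set_lebesgue_integral_def scaleR_sum_right integral_sum)

lemma integral_truncated_lnG_integrand:
  assumes \<alpha>: "\<alpha> > 0" and x: "x > 0"
  shows "(LBINT v:{0<..}. (1 - exp (- v) ^ n) * lnG_integrand x \<alpha> v)
           = (x - 1) * (x - 2 * \<alpha>) / (2 * \<alpha>) * ln (1 + n / \<alpha>) + (x - 1) * ln (Gamma (1 + n / \<alpha>))
             + (\<Sum>k<n. ln (Gamma ((1 + real k) / \<alpha>)) - ln (Gamma ((x + real k) / \<alpha>)))"
proof -
  define c where "c = (x - 1) * (x - 2 * \<alpha>) / (2 * \<alpha>)"
  define D where "D k v =
    malmsten_integrand \<alpha> ((1 + real k) / \<alpha>) v - malmsten_integrand \<alpha> ((x + real k) / \<alpha>) v" for k v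
  have pos: "(1 + real k) / \<alpha> > 0" "(x + real k) / \<alpha> > 0" "1 + n / \<alpha> > 0" "\<alpha> + n > 0" for k
    using \<alpha> x by (simp_all add: add_pos_nonneg)
  have int_D: "set_integrable lborel {0<..} (D k)" for k
    unfolding D_def using set_integrable_malmsten[OF \<alpha>] pos by (blast intro: set_integral_diff)
  have integral_D: "(LBINT v:{0<..}. D k v) = ln (Gamma ((1 + real k) / \<alpha>)) - ln (Gamma ((x + real k) / \<alpha>))" for k
    unfolding D_def using set_integrable_malmsten[OF \<alpha>] malmsten_integral_eq_ln_Gamma[OF \<alpha>] pos
    by (simp add: set_integral_diff)
  have "(LBINT v:{0<..}. (1 - exp (- v) ^ n) * lnG_integrand x \<alpha> v)
          = (LBINT v:{0<..}. c * frullani_integrand \<alpha> (\<alpha> + n) v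
                             + (x - 1) * malmsten_integrand \<alpha> (1 + n / \<alpha>) v
                             + (\<Sum>k<n. D k v))"
    unfolding c_def D_def
    by (intro set_lebesgue_integral_cong) (auto simp flip: lnG_integrand_truncation[OF \<alpha>])
  also have "\<dots> = c * (ln (\<alpha> + n) - ln \<alpha>) + (x - 1) * ln (Gamma (1 + n / \<alpha>))
                  + (\<Sum>k<n. LBINT v:{0<..}. D k v)"
    using set_integrable_frullani[OF \<alpha> pos(4)] set_integrable_malmsten[OF \<alpha> pos(3)]
      frullani_integral[OF \<alpha> pos(4)] malmsten_integral_eq_ln_Gamma[OF \<alpha> pos(3)]
      set_integral_sum[of "{..<n}", OF int_D]
    by (simp add: set_integral_add set_integrable_mult_right set_integral_mult_right)
  also have "ln (\<alpha> + n) - ln \<alpha> = ln (1 + n / \<alpha>)"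
  proof -
    have "1 + n / \<alpha> = (\<alpha> + n) / \<alpha>"
      using \<alpha> by (simp add: field_simps)
    then show ?thesis
      using \<alpha> pos(4) by (simp add: ln_div)
  qed
  finally show ?thesis
    unfolding c_def integral_D .
qed

lemma tendsto_set_integral_truncated:
  fixes f :: "real \<Rightarrow> real"
  assumes "set_integrable lborel {0<..} f"
  shows "(\<lambda>n. LBINT v:{0<..}. (1 - exp (- v) ^ n) * f v) \<longlonglongrightarrow> (LBINT v:{0<..}. f v)"
proof -
  define g where "g = (\<lambda>v::real. indicator {0<..} v * f v)"
  have g: "integrable lborel g"
    using assms by (simp add: g_def set_integrable_def)
  have "(\<lambda>n. integral\<^sup>L lborel (\<lambda>v. (1 - exp (- v) ^ n) * g v)) \<longlonglongrightarrow> integral\<^sup>L lborel g"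
  proof (rule integral_dominated_convergence[where w = "\<lambda>v. norm (g v)"])
    show "AE v in lborel. (\<lambda>n. (1 - exp (- v) ^ n) * g v) \<longlonglongrightarrow> g v"
    proof (rule AE_I2)
      fix v :: real
      show "(\<lambda>n. (1 - exp (- v) ^ n) * g v) \<longlonglongrightarrow> g v"
      proof (cases "v > 0")
        case True
        then have "(\<lambda>n. exp (- v) ^ n) \<longlonglongrightarrow> 0"
          by (intro LIMSEQ_power_zero) simp
        from tendsto_mult_right[OF tendsto_diff[OF tendsto_const[of 1] this], of "g v"]
        show ?thesis
          by simp
      qed (simp add: g_def)
    qed
    show "AE v in lborel. norm ((1 - exp (- v) ^ n) * g v) \<le> norm (g v)" for n
    proof (rule AE_I2)
      fix v :: real
      show "norm ((1 - exp (- v) ^ n) * g v) \<le> norm (g v)"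
      proof (cases "v > 0")
        case True
        then have "\<bar>1 - exp (- v) ^ n\<bar> \<le> 1"
          by (simp add: power_le_one)
        then show ?thesis
          by (simp add: abs_mult mult_left_le_one_le)
      qed (simp add: g_def)
    qed
  qed (use g in \<open>simp_all add: borel_measurable_integrable\<close>)
  then show ?thesis
    by (simp add: set_lebesgue_integral_def g_def mult.left_commute)
qed

lemma prod_Gamma_quotient_eq_exp:
  fixes a b :: "nat \<Rightarrow> real"
  assumes "\<And>k. a k > 0" and "\<And>k. b k > 0"
  shows "(\<Prod>k<n. Gamma (a k) / Gamma (b k)) = exp (\<Sum>k<n. ln (Gamma (a k)) - ln (Gamma (b k)))"
proof -
  have "exp (ln (Gamma (a k)) - ln (Gamma (b k))) = Gamma (a k) / Gamma (b k)" for k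
    using assms by (simp add: exp_diff)
  then show ?thesis
    by (simp add: exp_sum)
qed

lemma exp_integral_truncated_lnG_integrand:
  assumes "\<alpha> > 0" and "x > 0"
  shows "exp (LBINT v:{0<..}. (1 - exp (- v) ^ n) * lnG_integrand x \<alpha> v)
           = (1 + real n / \<alpha>) powr ((x - 1) * (x - 2 * \<alpha>) / (2 * \<alpha>))
             * Gamma (1 + real n / \<alpha>) powr (x - 1)
             * (\<Prod>k<n. Gamma ((1 + real k) / \<alpha>) / Gamma ((x + real k) / \<alpha>))"
proof -
  have N: "1 + real n / \<alpha> > 0"
    using assms by (simp add: add_pos_nonneg)
  have "1 + real n / \<alpha> \<noteq> 0" "Gamma (1 + real n / \<alpha>) \<noteq> 0"
    using Gamma_real_pos[OF N] N by linarith+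
  moreover have "(1 + real k) / \<alpha> > 0" "(x + real k) / \<alpha> > 0" for k
    using assms by (simp_all add: add_pos_nonneg)
  ultimately show ?thesis
    using assms by (simp add: integral_truncated_lnG_integrand prod_Gamma_quotient_eq_exp powr_def exp_add)
qed

theorem mainTheorem14:
  fixes \<alpha> x :: real
  assumes "\<alpha> > 0" and "x > 0"
  shows "(\<lambda>n::nat. (1 + real n / \<alpha>) powr ((x - 1) * (x - 2 * \<alpha>) / (2 * \<alpha>))
            * Gamma (1 + real n / \<alpha>) powr (x - 1)
            * (\<Prod>k<n. Gamma ((1 + real k) / \<alpha>) / Gamma ((x + real k) / \<alpha>)))
         \<longlonglongrightarrow> G x \<alpha>"
proof -
  have "(\<lambda>n. LBINT v:{0<..}. (1 - exp (- v) ^ n) * lnG_integrand x \<alpha> v)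
          \<longlonglongrightarrow> (LBINT v:{0<..}. lnG_integrand x \<alpha> v)"
    using assms by (intro tendsto_set_integral_truncated set_integrable_lnG_integrand)
  from tendsto_exp[OF this] show ?thesis
    unfolding G_def exp_integral_truncated_lnG_integrand[OF assms] .
qed

end
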